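(* Let $q \geq 5$ be a prime power and let $\mathcal{X}$ be a plane curve of degree $q-1$ defined over $\mathbb{F}_q$ without $\mathbb{F}_q$-linear components with $\mathrm{N}_q(\mathcal{X}) = (q-1)^2$. Then the set $\mathcal{X}(\mathbb{F}_q) \subseteq \mathbb{P}^2(\mathbb{F}_q)$ is a $((q-1)^2, q-1)$-arc.
   Context: $\mathcal{X}(\mathbb{F}_q) = \mathcal{X} \cap \mathbb{P}^2(\mathbb{F}_q)$ and $\mathrm{N}_q(\mathcal{X}) = \#\mathcal{X}(\mathbb{F}_q)$. "Without $\mathbb{F}_q$-linear components" means no line defined over $\mathbb{F}_q$ is a component. A $(k,n)$-arc in $\mathbb{P}^2(\mathbb{F}_q)$ is a set of $k$ points such that every line of $\mathbb{P}^2(\mathbb{F}_q)$ contains at most $n$ of its points and some line contains exactly $n$ of its points. *)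

theory Defs
  imports Main "HOL-Library.Cardinality"
begin

text \<open>Ternary forms over a field: coefficient functions on exponent triples (i,j,k),
  standing for the monomial x^i y^j z^k.\<close>

type_synonym 'a form3 = "nat \<times> nat \<times> nat \<Rightarrow> 'a"

definition homog :: "nat \<Rightarrow> ('a::zero) form3 \<Rightarrow> bool" where
  "homog d F \<longleftrightarrow> (\<forall>i j k. F (i,j,k) \<noteq> 0 \<longrightarrow> i + j + k = d)"

definition pmul :: "('a::comm_ring_1) form3 \<Rightarrow> 'a form3 \<Rightarrow> 'a form3" where
  "pmul F G = (\<lambda>(i,j,k). \<Sum>(a,b,c)\<in>{0..i}\<times>{0..j}\<times>{0..k}.
                 F (a,b,c) * G (i-a, j-b, k-c))"

definition lin_form :: "'a::zero \<times> 'a \<times> 'a \<Rightarrow> 'a form3" where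
  "lin_form l = (\<lambda>m. if m = (1,0,0) then fst l else if m = (0,1,0) then fst (snd l)
                     else if m = (0,0,1) then snd (snd l) else 0)"

definition eval_form :: "nat \<Rightarrow> ('a::comm_ring_1) form3 \<Rightarrow> 'a \<times> 'a \<times> 'a \<Rightarrow> 'a" where
  "eval_form d F v = (\<Sum>(i,j)\<in>{(i,j). i + j \<le> d}.
      F (i, j, d - i - j) * fst v ^ i * fst (snd v) ^ j * snd (snd v) ^ (d - i - j))"

definition plane_curve :: "nat \<Rightarrow> ('a::field) form3 \<Rightarrow> bool" where
  "plane_curve d F \<longleftrightarrow> homog d F \<and> F \<noteq> (\<lambda>_. 0)"

definition has_linear_component :: "nat \<Rightarrow> ('a::field) form3 \<Rightarrow> bool" where
  "has_linear_component d F \<longleftrightarrow>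
     (\<exists>l G. l \<noteq> (0,0,0) \<and> homog (d - 1) G \<and> F = pmul (lin_form l) G)"

definition proj_pt :: "'a::field \<times> 'a \<times> 'a \<Rightarrow> ('a \<times> 'a \<times> 'a) set" where
  "proj_pt v = {(c * fst v, c * fst (snd v), c * snd (snd v)) | c. c \<noteq> 0}"

definition P2 :: "('a::field \<times> 'a \<times> 'a) set set" where
  "P2 = {proj_pt v | v. v \<noteq> (0,0,0)}"

definition line_pts :: "'a::field \<times> 'a \<times> 'a \<Rightarrow> ('a \<times> 'a \<times> 'a) set set" where
  "line_pts l = {proj_pt v | v. v \<noteq> (0,0,0) \<and>
      fst l * fst v + fst (snd l) * fst (snd v) + snd (snd l) * snd (snd v) = 0}"

definition lines_P2 :: "('a::field \<times> 'a \<times> 'a) set set set" where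
  "lines_P2 = {line_pts l | l. l \<noteq> (0,0,0)}"

definition rat_points :: "nat \<Rightarrow> ('a::field) form3 \<Rightarrow> ('a \<times> 'a \<times> 'a) set set" where
  "rat_points d F = {proj_pt v | v. v \<noteq> (0,0,0) \<and> eval_form d F v = 0}"

definition is_arc :: "nat \<Rightarrow> nat \<Rightarrow> ('a::field \<times> 'a \<times> 'a) set set \<Rightarrow> bool" where
  "is_arc k n S \<longleftrightarrow> S \<subseteq> P2 \<and> finite S \<and> card S = k \<and>
     (\<forall>L\<in>lines_P2. card (L \<inter> S) \<le> n) \<and> (\<exists>L\<in>lines_P2. card (L \<inter> S) = n)"

end

theory Submission imports Defs "HOL-Computational_Algebra.Polynomial"
begin

(* Let deg F = q - 1. If a line l = 0 is not a component of the curve, dividing F by l leaves a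
   remainder R free of one variable; on the line F agrees with R, a nonzero binary form of degree
   q - 1, so the line meets the curve in at most q - 1 points. If no line met X(F_q) in exactly
   q - 1 points, each of the q + 1 lines through a point P of X(F_q) would carry at most q - 3
   further points, giving N_q(X) <= 1 + (q + 1)(q - 3) < (q - 1)^2. *)

section \<open>Coordinate vectors\<close>

definition dot3 :: "('a::comm_ring_1) \<times> 'a \<times> 'a \<Rightarrow> 'a \<times> 'a \<times> 'a \<Rightarrow> 'a" where
  "dot3 l v = fst l * fst v + fst (snd l) * fst (snd v) + snd (snd l) * snd (snd v)"

definition scale3 :: "('a::comm_ring_1) \<Rightarrow> 'a \<times> 'a \<times> 'a \<Rightarrow> 'a \<times> 'a \<times> 'a" where
  "scale3 t v = (t * fst v, t * fst (snd v), t * snd (snd v))"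

definition nonproportional :: "('a::comm_ring_1 \<times> 'a \<times> 'a) set \<Rightarrow> bool" where
  "nonproportional A \<longleftrightarrow> (\<forall>v\<in>A. \<forall>w\<in>A. \<forall>t. w = scale3 t v \<longrightarrow> w = v)"

lemma scale3_scale3 [simp]: "scale3 s (scale3 t v) = scale3 (s * t) v"
  by (simp add: scale3_def mult.assoc)

lemma scale3_eq_0_iff: "scale3 t v = (0,0,0) \<longleftrightarrow> t = 0 \<or> v = (0,0,0)"
  for v :: "'a::field \<times> 'a \<times> 'a"
  by (auto simp: scale3_def prod_eq_iff)

lemma dot3_scale3: "dot3 l (scale3 t v) = t * dot3 l v"
  by (simp add: dot3_def scale3_def algebra_simps)

lemma dot3_scale3_left: "dot3 (scale3 t l) v = t * dot3 l v"
  by (simp add: dot3_def scale3_def algebra_simps)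

section \<open>Ternary forms\<close>

definition exps3 :: "nat \<Rightarrow> (nat \<times> nat \<times> nat) set" where
  "exps3 d = {(i,j,k). i + j + k = d}"

definition monom3 :: "nat \<times> nat \<times> nat \<Rightarrow> ('a::comm_ring_1) \<times> 'a \<times> 'a \<Rightarrow> 'a" where
  "monom3 m v = fst v ^ fst m * fst (snd v) ^ fst (snd m) * snd (snd v) ^ snd (snd m)"

definition times_monom :: "nat \<times> nat \<times> nat \<Rightarrow> ('a::zero) form3 \<Rightarrow> 'a form3" where
  "times_monom u G = (\<lambda>(i,j,k).
     if fst u \<le> i \<and> fst (snd u) \<le> j \<and> snd (snd u) \<le> k
     then G (i - fst u, j - fst (snd u), k - snd (snd u)) else 0)"

lemma finite_exps3 [simp]: "finite (exps3 d)"
proof -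
  have "exps3 d \<subseteq> {0..d} \<times> {0..d} \<times> {0..d}" by (auto simp: exps3_def)
  thus ?thesis by (rule finite_subset) auto
qed

lemma eval_form_exps3: "eval_form d F v = (\<Sum>m\<in>exps3 d. F m * monom3 m v)"
  unfolding eval_form_def
  by (rule sum.reindex_bij_witness[where i = "\<lambda>(i,j,k). (i,j)" and j = "\<lambda>(i,j). (i,j,d-i-j)"])
     (auto simp: exps3_def monom3_def)

lemma eval_form_add: "eval_form d (\<lambda>m. P m + Q m) v = eval_form d P v + eval_form d Q v"
  unfolding eval_form_exps3 by (simp add: sum.distrib distrib_right)

lemma eval_form_cmult: "eval_form d (\<lambda>m. c * P m) v = c * eval_form d P v"
  unfolding eval_form_exps3 by (simp add: sum_distrib_left mult_ac)

lemma eval_form_scale3: "eval_form d F (scale3 t v) = t ^ d * eval_form d F v"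
  unfolding eval_form_exps3 sum_distrib_left
proof (rule sum.cong)
  fix m assume "m \<in> exps3 d"
  then obtain i j k where m: "m = (i,j,k)" "i + j + k = d" by (auto simp: exps3_def)
  have "t ^ d = t ^ i * t ^ j * t ^ k" using m(2) by (simp add: power_add[symmetric])
  thus "F m * monom3 m (scale3 t v) = t ^ d * (F m * monom3 m v)"
    unfolding m(1) by (simp add: monom3_def scale3_def power_mult_distrib mult_ac)
qed simp

lemma eval_form_times_monom:
  "eval_form (n + a + b + c) (times_monom (a,b,c) G) v = monom3 (a,b,c) v * eval_form n G v"
proof -
  have "eval_form (n + a + b + c) (times_monom (a,b,c) G) v
      = (\<Sum>m\<in>{m\<in>exps3 (n + a + b + c). a \<le> fst m \<and> b \<le> fst (snd m) \<and> c \<le> snd (snd m)}.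
           G (fst m - a, fst (snd m) - b, snd (snd m) - c) * monom3 m v)"
    by (auto simp: eval_form_exps3 sum.inter_filter times_monom_def intro!: sum.cong)
  also have "\<dots> = (\<Sum>m\<in>exps3 n. monom3 (a,b,c) v * (G m * monom3 m v))"
    by (rule sym, rule sum.reindex_bij_witness[where j = "\<lambda>(i,j,k). (i+a,j+b,k+c)"
          and i = "\<lambda>(i,j,k). (i-a,j-b,k-c)"])
       (auto simp: exps3_def monom3_def power_add mult_ac)
  finally show ?thesis unfolding eval_form_exps3 by (simp add: sum_distrib_left)
qed

lemma pmul_lin_form:
  "pmul (lin_form (a,b,c)) G (i,j,k) =
     (if 0 < i then a * G (i-1,j,k) else 0) + (if 0 < j then b * G (i,j-1,k) else 0)
     + (if 0 < k then c * G (i,j,k-1) else 0)"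
proof -
  let ?B = "{0..i} \<times> {0..j} \<times> {0..k}"
  let ?t = "\<lambda>m. G (i - fst m, j - fst (snd m), k - snd (snd m))"
  have "pmul (lin_form (a,b,c)) G (i,j,k) = (\<Sum>m\<in>?B. lin_form (a,b,c) m * ?t m)"
    unfolding pmul_def by (auto intro!: sum.cong)
  also have "\<dots> = (\<Sum>m\<in>?B. if m = (1,0,0) then a * ?t m else 0)
      + (\<Sum>m\<in>?B. if m = (0,1,0) then b * ?t m else 0) + (\<Sum>m\<in>?B. if m = (0,0,1) then c * ?t m else 0)"
    unfolding sum.distrib[symmetric] by (rule sum.cong) (auto simp: lin_form_def)
  also have "\<dots> = (if 0 < i then a * G (i-1,j,k) else 0) + (if 0 < j then b * G (i,j-1,k) else 0)
     + (if 0 < k then c * G (i,j,k-1) else 0)"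
    by (simp add: sum.delta)
  finally show ?thesis .
qed

lemma pmul_lin_form_eq_times_monom:
  "pmul (lin_form (a,b,c)) G = (\<lambda>m. a * times_monom (1,0,0) G m
     + b * times_monom (0,1,0) G m + c * times_monom (0,0,1) G m)"
  by (auto simp: pmul_lin_form times_monom_def Suc_le_eq)

lemma eval_form_pmul_lin_form:
  "eval_form (Suc e) (pmul (lin_form l) G) v = dot3 l v * eval_form e G v"
proof -
  obtain a b c where l: "l = (a,b,c)" by (cases l)
  have "eval_form (Suc e) (pmul (lin_form l) G) v =
      a * eval_form (e + 1 + 0 + 0) (times_monom (1,0,0) G) v
      + b * eval_form (e + 0 + 1 + 0) (times_monom (0,1,0) G) v
      + c * eval_form (e + 0 + 0 + 1) (times_monom (0,0,1) G) v"
    by (simp add: l pmul_lin_form_eq_times_monom eval_form_add eval_form_cmult)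
  also have "\<dots> = dot3 l v * eval_form e G v"
    unfolding eval_form_times_monom by (simp add: l monom3_def dot3_def algebra_simps)
  finally show ?thesis .
qed

lemma eval_form_z_free:
  assumes "\<And>i j k. 0 < k \<Longrightarrow> R (i,j,k) = 0"
  shows "eval_form d R v = (\<Sum>i\<le>d. R (i, d - i, 0) * fst v ^ i * fst (snd v) ^ (d - i))"
proof -
  have "R m = 0" if "snd (snd m) \<noteq> 0" for m
    using assms[of "snd (snd m)" "fst m" "fst (snd m)"] that by simp
  hence "eval_form d R v = (\<Sum>m\<in>{m\<in>exps3 d. snd (snd m) = 0}. R m * monom3 m v)"
    unfolding eval_form_exps3 by (intro sum.mono_neutral_right) auto
  also have "\<dots> = (\<Sum>i\<le>d. R (i, d - i, 0) * fst v ^ i * fst (snd v) ^ (d - i))"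
    by (rule sum.reindex_bij_witness[where i = "\<lambda>i. (i, d - i, 0)" and j = fst])
       (auto simp: exps3_def monom3_def)
  finally show ?thesis .
qed

section \<open>Zeros of binary forms\<close>

lemma binary_form_dehomogenize:
  fixes r :: "nat \<Rightarrow> 'a::field"
  assumes "y \<noteq> 0"
  shows "(\<Sum>i\<le>d. r i * x ^ i * y ^ (d - i)) = y ^ d * poly (\<Sum>i\<le>d. monom (r i) i) (x / y)"
  unfolding poly_sum poly_monom sum_distrib_left
proof (rule sum.cong)
  fix i assume "i \<in> {..d}"
  hence "y ^ d = y ^ i * y ^ (d - i)" by (simp add: power_add[symmetric])
  thus "r i * x ^ i * y ^ (d - i) = y ^ d * (r i * (x / y) ^ i)"
    using assms by (simp add: power_divide field_simps)
qed simp

lemma binary_form_coeff_eq_0: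
  fixes r :: "nat \<Rightarrow> 'a::field" and A :: "('a \<times> 'a) set"
  assumes card: "d < card A" and nz: "(0,0) \<notin> A"
    and zeros: "\<And>x y. (x,y) \<in> A \<Longrightarrow> (\<Sum>i\<le>d. r i * x ^ i * y ^ (d - i)) = 0"
    and nonprop: "\<And>x y x' y'. (x,y) \<in> A \<Longrightarrow> (x',y') \<in> A \<Longrightarrow> x * y' = x' * y \<Longrightarrow> (x,y) = (x',y')"
    and "i \<le> d"
  shows "r i = 0"
proof -
  define p where "p = (\<Sum>i\<le>d. monom (r i) i)"
  have coeff_p: "coeff p i = (if i \<le> d then r i else 0)" for i
    unfolding p_def coeff_sum coeff_monom by (auto simp: sum.delta)
  have "p = 0"
  proof (rule ccontr)
    assume "p \<noteq> 0"
    have fin: "finite A" using card card.infinite by fastforce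
    define A0 where "A0 = {v\<in>A. snd v = 0}"
    define A1 where "A1 = {v\<in>A. snd v \<noteq> 0}"
    have "A = A0 \<union> A1" "A0 \<inter> A1 = {}" by (auto simp: A0_def A1_def)
    hence "card A = card A0 + card A1" using fin by (simp add: card_Un_disjoint)
    have "poly p (x / y) = 0" if "(x,y) \<in> A1" for x y
      using zeros[of x y] binary_form_dehomogenize[where x = x and y = y and r = r and d = d] that by (simp add: A1_def p_def)
    moreover have "inj_on (\<lambda>(x,y). x / y) A1"
      by (rule inj_onI) (auto simp: A1_def field_simps dest: nonprop)
    ultimately have "card A1 \<le> card {t. poly p t = 0}"
      using \<open>p \<noteq> 0\<close> by (subst card_image[symmetric]) (auto intro!: card_mono simp: poly_roots_finite)
    also have "\<dots> \<le> degree p" by (rule card_poly_roots_bound[OF \<open>p \<noteq> 0\<close>])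
    finally have "card A1 \<le> degree p" .
    moreover have "card A0 + degree p \<le> d"
    proof (cases "A0 = {}")
      case True
      thus ?thesis by (auto intro: degree_le simp: coeff_p)
    next
      case False
      then obtain x0 where x0: "(x0, 0) \<in> A" by (force simp: A0_def)
      hence "x0 \<noteq> 0" using nz by auto
      have "(\<Sum>i\<le>d. r i * x0 ^ i * 0 ^ (d - i)) = r d * x0 ^ d"
        by (rule trans[OF sum.mono_neutral_right[of "{..d}" "{d}"]]) auto
      hence "coeff p d = 0" using zeros[OF x0] \<open>x0 \<noteq> 0\<close> by (simp add: coeff_p)
      moreover have "degree p \<le> d" by (auto intro: degree_le simp: coeff_p)
      ultimately have "degree p < d"
        using \<open>p \<noteq> 0\<close> by (metis le_neq_implies_less leading_coeff_0_iff)
      moreover have "card A0 \<le> 1"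
        unfolding A0_def using fin by (auto simp: card_le_Suc0_iff_eq dest: nonprop)
      ultimately show ?thesis by simp
    qed
    ultimately show False using card \<open>card A = card A0 + card A1\<close> by simp
  qed
  thus ?thesis using coeff_p[of i] \<open>i \<le> d\<close> by simp
qed

section \<open>Dividing a form by a linear form\<close>

(* The quotient G of F by a x + b y + c z (c \<noteq> 0): the coefficient equation of pmul at the
   exponent (i, j, k + 1), solved for G (i, j, k). *)
function lin_quot :: "'a::field \<Rightarrow> 'a \<Rightarrow> 'a \<Rightarrow> 'a form3 \<Rightarrow> nat \<Rightarrow> nat \<Rightarrow> nat \<Rightarrow> 'a" where
  "lin_quot a b c F i j k = (F (i,j,Suc k) - (if 0 < i then a * lin_quot a b c F (i-1) j (Suc k) else 0)
       - (if 0 < j then b * lin_quot a b c F i (j-1) (Suc k) else 0)) / c"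
  by auto
termination by (relation "measure (\<lambda>(a,b,c,F,i,j,k). i + j)") auto

declare lin_quot.simps [simp del]

lemma lin_quot_eq_0: "homog (Suc e) F \<Longrightarrow> i + j + k \<noteq> e \<Longrightarrow> lin_quot a b c F i j k = 0"
proof (induction a b c F i j k rule: lin_quot.induct)
  case (1 a b c F i j k)
  have "F (i,j,Suc k) = 0" using "1.prems" unfolding homog_def by (metis add_Suc_right nat.inject)
  with 1 show ?case by (subst lin_quot.simps) auto
qed

lemma lin_form_division:
  fixes F :: "'a::field form3"
  assumes hom: "homog (Suc e) F" and c: "c \<noteq> 0"
  obtains G R where "homog e G" and "homog (Suc e) R" and "\<And>i j k. 0 < k \<Longrightarrow> R (i,j,k) = 0"
    and "F = (\<lambda>m. pmul (lin_form (a,b,c)) G m + R m)"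
proof
  define G where "G = (\<lambda>(i,j,k). lin_quot a b c F i j k)"
  show homG: "homog e G" unfolding homog_def G_def by (metis lin_quot_eq_0[OF hom] case_prod_conv)
  define P where "P = pmul (lin_form (a,b,c)) G"
  show "F = (\<lambda>m. P m + (F m - P m))" by simp
  show "F (i,j,k) - P (i,j,k) = 0" if k_pos: "0 < k" for i j k
  proof -
    obtain k' where k: "k = Suc k'" using gr0_implies_Suc[OF k_pos] ..
    have "c * lin_quot a b c F i j k' = F (i,j,k)
        - (if 0 < i then a * lin_quot a b c F (i-1) j k else 0)
        - (if 0 < j then b * lin_quot a b c F i (j-1) k else 0)"
      using c unfolding k by (subst lin_quot.simps) simp
    thus ?thesis unfolding P_def pmul_lin_form G_def k by simp
  qed
  have "P (i,j,k) = 0" if "i + j + k \<noteq> Suc e" for i j k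
  proof -
    have "G (i', j', k') = 0" if "i' + j' + k' \<noteq> e" for i' j' k'
      using homG that unfolding homog_def by blast
    thus ?thesis using \<open>i + j + k \<noteq> Suc e\<close> unfolding P_def pmul_lin_form by auto
  qed
  thus "homog (Suc e) (\<lambda>m. F m - P m)" using hom unfolding homog_def by (metis diff_zero)
qed

lemma proportional_if_on_line:
  fixes v w :: "'a::field \<times> 'a \<times> 'a"
  assumes c: "c \<noteq> 0" and v: "dot3 (a,b,c) v = 0" "v \<noteq> (0,0,0)" and w: "dot3 (a,b,c) w = 0"
    and xy: "fst v * fst (snd w) = fst w * fst (snd v)"
  shows "\<exists>t. w = scale3 t v"
proof -
  obtain x y z x' y' z' where vw: "v = (x,y,z)" "w = (x',y',z')" by (cases v, cases w)
  have z: "z = - (a * x + b * y) / c" and z': "z' = - (a * x' + b * y') / c"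
    using v w c unfolding vw dot3_def by (simp_all add: field_simps add_eq_0_iff)
  obtain t where t: "x' = t * x" "y' = t * y"
  proof (cases "x = 0")
    case True
    hence "y \<noteq> 0" using v z unfolding vw by auto
    thus ?thesis using xy True unfolding vw by (intro that[of "y' / y"]) auto
  next
    case False
    thus ?thesis using xy unfolding vw by (intro that[of "x' / x"]) (auto simp: field_simps)
  qed
  hence "z' = t * z" unfolding z z' using c by (simp add: field_simps)
  thus ?thesis using t unfolding vw scale3_def by auto
qed

(* On a line with c \<noteq> 0 a point is determined up to scaling by its first two coordinates,
   so a form without z restricts to a binary form there. *)
lemma z_free_form_eq_0_if_zeros_on_line:
  fixes R :: "'a::field form3"
  assumes z_free: "\<And>i j k. 0 < k \<Longrightarrow> R (i,j,k) = 0" and hom: "homog d R"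
    and c: "c \<noteq> 0" and card: "d < card A"
    and zeros: "\<And>v. v \<in> A \<Longrightarrow> v \<noteq> (0,0,0) \<and> dot3 (a,b,c) v = 0 \<and> eval_form d R v = 0"
    and np: "nonproportional A"
  shows "R = (\<lambda>_. 0)"
proof -
  define xy where "xy = (\<lambda>v::'a \<times> 'a \<times> 'a. (fst v, fst (snd v)))"
  have xy_eq: "v = w" if v: "v \<in> A" and w: "w \<in> A"
    and xy_prop: "fst v * fst (snd w) = fst w * fst (snd v)" for v w
  proof -
    have "\<exists>t. w = scale3 t v"
      by (rule proportional_if_on_line[OF c _ _ _ xy_prop]) (use zeros[OF v] zeros[OF w] in auto)
    then obtain t where "w = scale3 t v" ..
    with np v w show ?thesis unfolding nonproportional_def by metis
  qed
  have R0: "R (i, d - i, 0) = 0" if "i \<le> d" for i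
  proof (rule binary_form_coeff_eq_0[where A = "xy ` A" and r = "\<lambda>i. R (i, d - i, 0)"])
    have "inj_on xy A" by (rule inj_onI, rule xy_eq) (auto simp: xy_def)
    thus "d < card (xy ` A)" using card by (simp add: card_image)
    show "(0,0) \<notin> xy ` A"
    proof
      assume "(0,0) \<in> xy ` A"
      then obtain z where "(0,0,z) \<in> A" by (auto simp: xy_def)
      thus False using zeros[of "(0,0,z)"] c by (auto simp: dot3_def)
    qed
    show "(\<Sum>i\<le>d. R (i, d - i, 0) * x ^ i * y ^ (d - i)) = 0" if "(x,y) \<in> xy ` A" for x y
      using that zeros eval_form_z_free[where R = R, OF z_free] by (auto simp: xy_def)
    show "(x,y) = (x',y')"
      if xy_A: "(x,y) \<in> xy ` A" "(x',y') \<in> xy ` A" and xy_prop: "x * y' = x' * y" for x y x' y'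
    proof -
      obtain v w where vw: "v \<in> A" "w \<in> A" "(x,y) = xy v" "(x',y') = xy w" using xy_A by blast
      have "v = w" by (rule xy_eq[OF vw(1,2)]) (use vw(3,4) xy_prop in \<open>simp add: xy_def\<close>)
      thus ?thesis using vw by simp
    qed
  qed fact
  have "R (i,j,k) = 0" for i j k
  proof (cases "0 < k \<or> i + j + k \<noteq> d")
    case False
    hence "(i,j,k) = (i, d - i, 0)" "i \<le> d" by auto
    thus ?thesis using R0 by metis
  qed (use z_free hom in \<open>unfold homog_def, blast\<close>)
  thus ?thesis by auto
qed

lemma lin_form_dvd_if_zeros_on_line_z:
  fixes F :: "'a::field form3"
  assumes hom: "homog (Suc e) F" and c: "c \<noteq> 0" and card: "Suc e < card A"
    and zeros: "\<And>v. v \<in> A \<Longrightarrow> v \<noteq> (0,0,0) \<and> dot3 (a,b,c) v = 0 \<and> eval_form (Suc e) F v = 0"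
    and np: "nonproportional A"
  shows "\<exists>G. homog e G \<and> F = pmul (lin_form (a,b,c)) G"
proof -
  obtain G R where G: "homog e G" and R: "homog (Suc e) R" "\<And>i j k. 0 < k \<Longrightarrow> R (i,j,k) = 0"
    and F: "F = (\<lambda>m. pmul (lin_form (a,b,c)) G m + R m)"
    by (rule lin_form_division[OF hom c, where a = a and b = b]) blast
  have "eval_form (Suc e) R v = 0" if "v \<in> A" for v
    using zeros[OF that] by (auto simp: F eval_form_add eval_form_pmul_lin_form)
  hence "R = (\<lambda>_. 0)"
    using z_free_form_eq_0_if_zeros_on_line[where R = R, OF R(2) R(1) c card] zeros np by blast
  thus ?thesis using G F by auto
qed

definition swap_last :: "nat \<Rightarrow> 'b \<times> 'b \<times> 'b \<Rightarrow> 'b \<times> 'b \<times> 'b" where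
  "swap_last n = (\<lambda>(x,y,z). if n = 0 then (z,y,x) else if n = 1 then (x,z,y) else (x,y,z))"

lemma swap_last_swap_last [simp]: "swap_last n (swap_last n v) = v"
  by (auto simp: swap_last_def split: prod.splits)

lemma swap_last_eq_iff [simp]: "swap_last n v = swap_last n w \<longleftrightarrow> v = w"
  by (metis swap_last_swap_last)

lemma swap_last_eq_0_iff [simp]: "swap_last n v = (0,0,0) \<longleftrightarrow> v = (0,0,0)"
  by (auto simp: swap_last_def split: prod.splits)

lemma ex_swap_last_nonzero: "v \<noteq> (0,0,0) \<Longrightarrow> \<exists>n. snd (snd (swap_last n v)) \<noteq> 0"
  by (cases v) (auto simp: swap_last_def intro: exI[of _ 0] exI[of _ 1] exI[of _ 2])

lemma swap_last_scale3: "swap_last n (scale3 t v) = scale3 t (swap_last n v)"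
  by (auto simp: swap_last_def scale3_def split: prod.splits)

lemma dot3_swap_last: "dot3 (swap_last n l) (swap_last n v) = dot3 l v"
  by (auto simp: swap_last_def dot3_def algebra_simps split: prod.splits)

lemma homog_comp_swap_last: "homog d F \<Longrightarrow> homog d (F \<circ> swap_last n)"
  unfolding homog_def swap_last_def by (auto split: if_splits) (metis add.assoc add.commute)+

lemma eval_form_comp_swap_last: "eval_form d (F \<circ> swap_last n) (swap_last n v) = eval_form d F v"
  unfolding eval_form_exps3
  by (rule sum.reindex_bij_witness[where i = "swap_last n" and j = "swap_last n"])
     (auto simp: exps3_def monom3_def swap_last_def mult_ac split: prod.splits)

lemma pmul_lin_form_comp_swap_last:
  "pmul (lin_form (swap_last n l)) (G \<circ> swap_last n) = pmul (lin_form l) G \<circ> swap_last n"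
proof
  fix m :: "nat \<times> nat \<times> nat"
  obtain i j k where m: "m = (i,j,k)" by (cases m)
  obtain a b c where l: "l = (a,b,c)" by (cases l)
  show "pmul (lin_form (swap_last n l)) (G \<circ> swap_last n) m = (pmul (lin_form l) G \<circ> swap_last n) m"
    unfolding m l by (simp add: swap_last_def pmul_lin_form add_ac)
qed

lemma nonproportional_image_swap_last:
  "nonproportional A \<Longrightarrow> nonproportional (swap_last n ` A)"
  unfolding nonproportional_def by (auto simp: swap_last_scale3[symmetric])

lemma lin_form_dvd_if_zeros_on_line:
  fixes F :: "'a::field form3"
  assumes hom: "homog (Suc e) F" and l: "l \<noteq> (0,0,0)" and card: "Suc e < card A"
    and zeros: "\<And>v. v \<in> A \<Longrightarrow> v \<noteq> (0,0,0) \<and> dot3 l v = 0 \<and> eval_form (Suc e) F v = 0"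
    and np: "nonproportional A"
  shows "\<exists>G. homog e G \<and> F = pmul (lin_form l) G"
proof -
  obtain n a b c where abc: "swap_last n l = (a,b,c)" and c: "c \<noteq> 0"
    using ex_swap_last_nonzero[OF l] by (metis prod.collapse)
  let ?\<sigma> = "swap_last n"
  have "\<exists>G. homog e G \<and> F \<circ> ?\<sigma> = pmul (lin_form (a,b,c)) G"
  proof (rule lin_form_dvd_if_zeros_on_line_z[OF homog_comp_swap_last[OF hom] c])
    have "inj_on ?\<sigma> A" by (simp add: inj_on_def)
    thus "Suc e < card (?\<sigma> ` A)" using card by (simp add: card_image)
    show "v \<noteq> (0,0,0) \<and> dot3 (a,b,c) v = 0 \<and> eval_form (Suc e) (F \<circ> ?\<sigma>) v = 0"
      if v: "v \<in> ?\<sigma> ` A" for v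
    proof -
      obtain u where "u \<in> A" "v = ?\<sigma> u" using v by blast
      thus ?thesis using zeros[of u] by (simp flip: abc add: dot3_swap_last eval_form_comp_swap_last)
    qed
    show "nonproportional (?\<sigma> ` A)" using np by (rule nonproportional_image_swap_last)
  qed
  then obtain G where G: "homog e G" "F \<circ> ?\<sigma> = pmul (lin_form (?\<sigma> l)) G"
    unfolding abc by blast
  have "F = (F \<circ> ?\<sigma>) \<circ> ?\<sigma>" by (simp add: comp_def)
  also have "\<dots> = pmul (lin_form l) (G \<circ> ?\<sigma>)"
    using G(2) pmul_lin_form_comp_swap_last[of n l "G \<circ> ?\<sigma>"] by (simp add: comp_def)
  finally show ?thesis using homog_comp_swap_last[OF G(1)] by blast
qed

section \<open>Points and lines of the projective plane\<close>

lemma proj_pt_conv_scale3: "proj_pt v = {scale3 c v | c. c \<noteq> 0}"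
  by (simp add: proj_pt_def scale3_def)

lemma proj_pt_scale3:
  assumes "t \<noteq> 0" shows "proj_pt (scale3 t v) = proj_pt v"
proof -
  have "\<exists>c'. c' \<noteq> 0 \<and> scale3 c v = scale3 (c' * t) v" if "c \<noteq> 0" for c
    using assms that by (intro exI[of _ "c / t"]) simp
  thus ?thesis using assms unfolding proj_pt_conv_scale3 by fastforce
qed

lemma proj_pt_eq_imp_scale3: "proj_pt v = proj_pt w \<Longrightarrow> \<exists>t. t \<noteq> 0 \<and> w = scale3 t v"
proof -
  assume "proj_pt v = proj_pt w"
  moreover have "w \<in> proj_pt w" unfolding proj_pt_def by (auto intro: exI[of _ 1])
  ultimately show ?thesis unfolding proj_pt_def scale3_def by auto
qed

lemma mem_proj_pts_iff:
  assumes "\<And>t v. t \<noteq> 0 \<Longrightarrow> P (scale3 t v) \<longleftrightarrow> P v" and "p \<noteq> (0,0,0)"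
  shows "proj_pt p \<in> {proj_pt v | v. v \<noteq> (0,0,0) \<and> P v} \<longleftrightarrow> P p"
  using assms proj_pt_eq_imp_scale3 by blast

lemma line_pts_conv_dot3: "line_pts l = {proj_pt v | v. v \<noteq> (0,0,0) \<and> dot3 l v = 0}"
  unfolding line_pts_def dot3_def ..

lemma line_pts_scale3: "t \<noteq> 0 \<Longrightarrow> line_pts (scale3 t l) = line_pts l"
  unfolding line_pts_conv_dot3 by (simp add: dot3_scale3_left)

lemma mem_line_pts_iff: "p \<noteq> (0,0,0) \<Longrightarrow> proj_pt p \<in> line_pts l \<longleftrightarrow> dot3 l p = 0"
  unfolding line_pts_conv_dot3 by (rule mem_proj_pts_iff) (simp_all add: dot3_scale3)

lemma mem_rat_points_iff: "p \<noteq> (0,0,0) \<Longrightarrow> proj_pt p \<in> rat_points d F \<longleftrightarrow> eval_form d F p = 0"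
  unfolding rat_points_def by (rule mem_proj_pts_iff) (simp_all add: eval_form_scale3)

lemma lin_form_dvd_if_card_line_inter_gt:
  fixes F :: "'a::field form3"
  assumes hom: "homog (Suc e) F" and l: "l \<noteq> (0,0,0)"
    and card: "Suc e < card (line_pts l \<inter> rat_points (Suc e) F)"
  shows "\<exists>G. homog e G \<and> F = pmul (lin_form l) G"
proof -
  let ?S = "line_pts l \<inter> rat_points (Suc e) F"
  define rep :: "('a \<times> 'a \<times> 'a) set \<Rightarrow> 'a \<times> 'a \<times> 'a"
    where "rep P = (SOME v. v \<noteq> (0,0,0) \<and> P = proj_pt v)" for P
  have rep: "rep P \<noteq> (0,0,0) \<and> P = proj_pt (rep P)" if "P \<in> ?S" for P
    unfolding rep_def by (rule someI_ex) (use that in \<open>auto simp: rat_points_def\<close>)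
  have "inj_on rep ?S" by (rule inj_onI) (metis rep)
  show ?thesis
  proof (rule lin_form_dvd_if_zeros_on_line[OF hom l, where A = "rep ` ?S"])
    show "Suc e < card (rep ` ?S)" using card \<open>inj_on rep ?S\<close> by (simp add: card_image)
    show "v \<noteq> (0,0,0) \<and> dot3 l v = 0 \<and> eval_form (Suc e) F v = 0" if v: "v \<in> rep ` ?S" for v
    proof -
      obtain P where P: "P \<in> ?S" "v = rep P" using v by blast
      hence "v \<noteq> (0,0,0)" "proj_pt v \<in> line_pts l" "proj_pt v \<in> rat_points (Suc e) F"
        using rep[OF P(1)] by auto
      thus ?thesis by (simp add: mem_line_pts_iff mem_rat_points_iff)
    qed
    show "nonproportional (rep ` ?S)"
      unfolding nonproportional_def
    proof (intro ballI allI impI)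
      fix v w t assume v: "v \<in> rep ` ?S" and w: "w \<in> rep ` ?S" and wv: "w = scale3 t v"
      obtain P Q where P: "P \<in> ?S" "v = rep P" and Q: "Q \<in> ?S" "w = rep Q" using v w by blast
      have "t \<noteq> 0" using rep[OF Q(1)] Q(2) wv by (auto simp: scale3_def)
      have "Q = proj_pt (scale3 t v)" using rep[OF Q(1)] Q(2) wv by simp
      also have "\<dots> = P" using rep[OF P(1)] P(2) \<open>t \<noteq> 0\<close> by (simp add: proj_pt_scale3)
      finally show "w = v" using P Q by simp
    qed
  qed
qed

lemma card_line_inter_rat_points_le:
  fixes F :: "'a::field form3"
  assumes "homog (Suc e) F" and "\<not> has_linear_component (Suc e) F" and "L \<in> lines_P2"
  shows "card (L \<inter> rat_points (Suc e) F) \<le> Suc e"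
proof (rule ccontr)
  obtain l where l: "l \<noteq> (0,0,0)" "L = line_pts l" using assms(3) by (auto simp: lines_P2_def)
  assume "\<not> card (L \<inter> rat_points (Suc e) F) \<le> Suc e"
  then obtain G where "homog e G" "F = pmul (lin_form l) G"
    using lin_form_dvd_if_card_line_inter_gt[OF assms(1) l(1)] l(2) by auto
  hence "has_linear_component (Suc e) F"
    unfolding has_linear_component_def using l(1) by (intro exI[of _ l] exI[of _ G]) simp
  with assms(2) show False by simp
qed

section \<open>Counting lines over a finite field\<close>

lemma two_le_card_field: "2 \<le> CARD('a::{finite,field})"
proof -
  have "card {0::'a, 1} \<le> CARD('a)" by (rule card_mono) auto
  thus ?thesis by simp
qed

lemma card_orthogonal_le:
  fixes p :: "'a::{finite,field} \<times> 'a \<times> 'a"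
  assumes "p \<noteq> (0,0,0)"
  shows "card {l. dot3 l p = 0} \<le> CARD('a) ^ 2"
proof -
  obtain n where z: "snd (snd (swap_last n p)) \<noteq> 0" using ex_swap_last_nonzero[OF assms] ..
  let ?\<sigma> = "swap_last n"
  have "inj_on (\<lambda>l. (fst (?\<sigma> l), fst (snd (?\<sigma> l)))) {l. dot3 l p = 0}"
  proof (rule inj_onI)
    fix l l' assume "l \<in> {l. dot3 l p = 0}" "l' \<in> {l. dot3 l p = 0}"
      and eq: "(fst (?\<sigma> l), fst (snd (?\<sigma> l))) = (fst (?\<sigma> l'), fst (snd (?\<sigma> l')))"
    hence "dot3 (?\<sigma> l) (?\<sigma> p) = dot3 (?\<sigma> l') (?\<sigma> p)" by (simp add: dot3_swap_last)
    hence "snd (snd (?\<sigma> l)) * snd (snd (?\<sigma> p)) = snd (snd (?\<sigma> l')) * snd (snd (?\<sigma> p))"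
      using eq by (simp add: dot3_def)
    hence "?\<sigma> l = ?\<sigma> l'" using eq z by (simp add: prod_eq_iff)
    thus "l = l'" by simp
  qed
  hence "card {l. dot3 l p = 0} \<le> card (UNIV :: ('a \<times> 'a) set)"
    by (rule card_inj_on_le) auto
  thus ?thesis by (simp add: power2_eq_square)
qed

lemma card_lines_through_le:
  fixes p :: "'a::{finite,field} \<times> 'a \<times> 'a"
  assumes p: "p \<noteq> (0,0,0)"
  shows "card {L \<in> lines_P2. proj_pt p \<in> L} \<le> CARD('a) + 1"
proof -
  define q where "q = CARD('a)"
  define N where "N = {l. l \<noteq> (0,0,0) \<and> dot3 l p = 0}"
  have "card N = card {l. dot3 l p = 0} - 1"
    unfolding N_def by (subst card_Diff_singleton[symmetric]) (auto simp: dot3_def intro: arg_cong[where f = card])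
  hence "card N \<le> (q + 1) * (q - 1)"
    using card_orthogonal_le[OF p] by (simp add: q_def power2_eq_square algebra_simps)
  have fibre: "q - 1 \<le> card {l \<in> N. line_pts l = L}" if L: "L \<in> line_pts ` N" for L
  proof -
    obtain l0 where l0: "l0 \<in> N" "L = line_pts l0" using L by blast
    have "inj_on (\<lambda>t. scale3 t l0) (UNIV - {0})"
      using l0 by (auto simp: inj_on_def scale3_def N_def prod_eq_iff)
    hence "q - 1 = card ((\<lambda>t. scale3 t l0) ` (UNIV - {0}))"
      by (simp add: card_image q_def card_Diff_subset)
    also have "\<dots> \<le> card {l \<in> N. line_pts l = L}"
      using l0 by (intro card_mono) (auto simp: N_def line_pts_scale3 dot3_scale3_left scale3_eq_0_iff dest: sym)
    finally show ?thesis .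
  qed
  have "card (line_pts ` N) * (q - 1) \<le> (\<Sum>L\<in>line_pts ` N. card {l \<in> N. line_pts l = L})"
    using sum_bounded_below[of "line_pts ` N" "q - 1"] fibre by (simp add: mult.commute)
  also have "\<dots> = card N"
    unfolding card_eq_sum by (rule sum.image_gen[symmetric]) simp
  also have "\<dots> \<le> (q + 1) * (q - 1)" by fact
  finally have "card (line_pts ` N) * (q - 1) \<le> (q + 1) * (q - 1)" .
  moreover have "0 < q - 1" using two_le_card_field[where 'a = 'a] by (simp add: q_def)
  ultimately have "card (line_pts ` N) \<le> q + 1" using mult_le_cancel2 by blast
  moreover have "{L \<in> lines_P2. proj_pt p \<in> L} = line_pts ` N"
    by (auto simp: lines_P2_def N_def mem_line_pts_iff[OF p])
  ultimately show ?thesis by (simp add: q_def)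
qed

lemma ex_common_orthogonal:
  fixes p w :: "'a::{finite,field} \<times> 'a \<times> 'a"
  shows "\<exists>l. l \<noteq> (0,0,0) \<and> dot3 l p = 0 \<and> dot3 l w = 0"
proof -
  define f where "f l = (dot3 l p, dot3 l w)" for l :: "'a \<times> 'a \<times> 'a"
  have "\<not> inj f"
  proof
    assume "inj f"
    hence "CARD('a \<times> 'a \<times> 'a) \<le> CARD('a \<times> 'a)" by (rule card_inj_on_le) auto
    thus False using two_le_card_field[where 'a = 'a] by simp
  qed
  then obtain l1 l2 where "l1 \<noteq> l2" "f l1 = f l2" unfolding inj_def by blast
  moreover obtain a b c a' b' c' where "l1 = (a,b,c)" "l2 = (a',b',c')" by (cases l1, cases l2)
  ultimately have "(a - a', b - b', c - c') \<noteq> (0,0,0)"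
    "dot3 (a - a', b - b', c - c') p = 0" "dot3 (a - a', b - b', c - c') w = 0"
    by (auto simp: f_def dot3_def algebra_simps)
  thus ?thesis by blast
qed

lemma card_le_by_lines_through:
  fixes S :: "('a::{finite,field} \<times> 'a \<times> 'a) set set"
  assumes S: "S \<subseteq> P2" and P: "P \<in> S"
    and lines: "\<And>L. L \<in> lines_P2 \<Longrightarrow> P \<in> L \<Longrightarrow> card (L \<inter> S) \<le> n"
  shows "card S \<le> (CARD('a) + 1) * (n - 1) + 1"
proof -
  obtain p where p: "p \<noteq> (0,0,0)" "P = proj_pt p" using S P unfolding P2_def by blast
  let ?Ls = "{L \<in> lines_P2. P \<in> L}"
  have "S - {P} \<subseteq> (\<Union>L\<in>?Ls. L \<inter> S - {P})"
  proof
    fix Q assume Q: "Q \<in> S - {P}"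
    then obtain w where w: "w \<noteq> (0,0,0)" "Q = proj_pt w" using S unfolding P2_def by blast
    obtain l where l: "l \<noteq> (0,0,0)" "dot3 l p = 0" "dot3 l w = 0" using ex_common_orthogonal by blast
    hence "line_pts l \<in> lines_P2" unfolding lines_P2_def by blast
    hence "line_pts l \<in> ?Ls" "Q \<in> line_pts l" using p w l by (auto simp: mem_line_pts_iff)
    thus "Q \<in> (\<Union>L\<in>?Ls. L \<inter> S - {P})" using Q by blast
  qed
  hence "card (S - {P}) \<le> card (\<Union>L\<in>?Ls. L \<inter> S - {P})" by (rule card_mono[rotated]) simp
  also have "\<dots> \<le> (\<Sum>L\<in>?Ls. card (L \<inter> S - {P}))" by (rule card_UN_le) simp
  also have "\<dots> \<le> card ?Ls * (n - 1)"
  proof -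
    have "card (L \<inter> S - {P}) \<le> n - 1" if L: "L \<in> ?Ls" for L
    proof -
      have "card (L \<inter> S) \<le> n" "P \<in> L \<inter> S" using lines L P by auto
      thus ?thesis by (simp add: card_Diff_singleton)
    qed
    thus ?thesis using sum_bounded_above[of ?Ls "\<lambda>L. card (L \<inter> S - {P})" "n - 1"] by simp
  qed
  also have "\<dots> \<le> (CARD('a) + 1) * (n - 1)"
    using card_lines_through_le[OF p(1)] unfolding p(2) by (rule mult_right_mono) simp
  finally show ?thesis using P by (simp add: card_Diff_singleton)
qed

theorem lemma3p2:
  fixes F :: "('a::{finite,field}) form3"
  assumes "CARD('a) \<ge> 5"
    and "plane_curve (CARD('a) - 1) F"
    and "\<not> has_linear_component (CARD('a) - 1) F"
    and "card (rat_points (CARD('a) - 1) F) = (CARD('a) - 1)^2"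
  shows "is_arc ((CARD('a) - 1)^2) (CARD('a) - 1) (rat_points (CARD('a) - 1) F)"
proof -
  define q where "q = CARD('a)"
  define S where "S = rat_points (q - 1) F"
  have q5: "5 \<le> q" using assms(1) by (simp add: q_def)
  then obtain e where e: "q - 1 = Suc e" by (intro that[of "q - 2"]) simp
  have card_S: "card S = (q - 1)^2" using assms(4) by (simp add: S_def q_def)
  have S_P2: "S \<subseteq> P2" by (auto simp: S_def rat_points_def P2_def)
  have le: "card (L \<inter> S) \<le> q - 1" if "L \<in> lines_P2" for L
    using card_line_inter_rat_points_le[of e F L] assms(2,3) that
    unfolding S_def e q_def[symmetric] plane_curve_def by simp
  have "\<exists>L\<in>lines_P2. card (L \<inter> S) = q - 1"
  proof (rule ccontr)
    assume none: "\<not> ?thesis"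
    obtain P where "P \<in> S" using card_S e by (metis card.empty ex_in_conv power_eq_0_iff nat.distinct(1))
    moreover have "card (L \<inter> S) \<le> q - 2" if "L \<in> lines_P2" for L
      using le[OF that] none that by force
    ultimately have "card S \<le> (q + 1) * (q - 2 - 1) + 1"
      using card_le_by_lines_through[OF S_P2, of P "q - 2"] unfolding q_def by blast
    moreover obtain n where "q = n + 5" using q5 by (metis add.commute le_Suc_ex)
    ultimately show False using card_S by (simp add: power2_eq_square algebra_simps)
  qed
  thus ?thesis unfolding is_arc_def using S_P2 card_S le by (simp add: S_def q_def)
qed

end
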